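(* Let $\mathcal{M}$ be a finite $\mathcal{R}$-trivial monoid with $n=\#\mathcal{M}$, with elements ordered so that $\#\sigma_1\mathcal{M}\ge\dots\ge\#\sigma_n\mathcal{M}$ (so all elements of $\mathcal{U}^{\mathbb{Z}}_{\mathcal{M}}$ are upper triangular). Then: (1) Every idempotent element of $\mathcal{U}^{\mathbb{Z}}_{\mathcal{M}}$ has only entries $0$ and $1$ on its diagonal. (2) If $E\in\mathcal{U}^{\mathbb{Z}}_{\mathcal{M}}$ is idempotent and $\mathcal{D}_E$ is a single equivalence class of the loop-type relation $\sim$, then $E$ is primitive in $\mathcal{U}^{\mathbb{Z}}_{\mathcal{M}}$: whenever $E=X+Y$ with $X,Y\in\mathcal{U}^{\mathbb{Z}}_{\mathcal{M}}$, $X^2=X$, $Y^2=Y$, $XY=YX=0$, then $X=0$ or $Y=0$. (3) If $U\in\mathcal{U}^{\mathbb{Z}}_{\mathcal{M}}$ has only entries $0$ and $1$ on its diagonal, and $a,b\in\mathbb{Z}_{\ge0}$ satisfy $a\ge n-d_U$ and $b\ge d_U$, then $\mathcal{P}_{a,b}(U)=\mathrm{Id}-(\mathrm{Id}-U^a)^b$ is idempotent and has the same diagonal as $U$.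
   Context: $\mathcal{M}$ is $\mathcal{R}$-trivial: $\sigma\mathcal{M}=\tau\mathcal{M}$ implies $\sigma=\tau$. Matrices in $\mathrm{Mat}(\mathbb{Z},n)$ are indexed by elements of $\mathcal{M}$ according to the chosen ordering. $U_\sigma$ is the matrix with $(U_\sigma)_{\tau,\kappa}=1$ if $\tau\sigma=\kappa$ and $0$ otherwise; $\mathcal{U}^{\mathbb{Z}}_{\mathcal{M}}:=\{\sum_{\mu\in\mathcal{M}} r_\mu U_\mu : r_\mu\in\mathbb{Z}\}\subset\mathrm{Mat}(\mathbb{Z},n)$ (a subring isomorphic to the monoid ring $\mathbb{Z}\mathcal{M}$ via $\mu\mapsto U_\mu$). For $U\in\mathcal{U}^{\mathbb{Z}}_{\mathcal{M}}$: $\mathcal{D}_U:=\{\sigma\in\mathcal{M}: U_{\sigma,\sigma}=1\}$ and $d_U:=\#\mathcal{D}_U$. $\mathcal{L}_\sigma:=\{\tau:\sigma\tau=\sigma\}$, and $\sigma\sim\kappa$ (same loop-type) iff $\mathcal{L}_\sigma=\mathcal{L}_\kappa$. $\mathcal{P}_{a,b}(U):=\mathrm{Id}-(\mathrm{Id}-U^a)^b$ for $a,b\in\mathbb{Z}_{\ge 0}$. *)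

theory Defs
  imports Main
begin

text \<open>Integer matrices indexed by the elements of the monoid are functions
'm => 'm => int (row index, column index). The ordering of the elements
only serves to make the matrices upper triangular; none of the claims
depends on it.\<close>

type_synonym 'm imat = "'m \<Rightarrow> 'm \<Rightarrow> int"

definition R_trivial :: "('m::monoid_mult) itself \<Rightarrow> bool" where
  "R_trivial _ \<longleftrightarrow> (\<forall>\<sigma> \<tau> :: 'm. range (\<lambda>x. \<sigma> * x) = range (\<lambda>x. \<tau> * x) \<longrightarrow> \<sigma> = \<tau>)"

definition mmul :: "('m::finite) imat \<Rightarrow> 'm imat \<Rightarrow> 'm imat" where
  "mmul A B = (\<lambda>i k. \<Sum>j\<in>UNIV. A i j * B j k)"

definition madd :: "'m imat \<Rightarrow> 'm imat \<Rightarrow> 'm imat" where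
  "madd A B = (\<lambda>i j. A i j + B i j)"

definition msub :: "'m imat \<Rightarrow> 'm imat \<Rightarrow> 'm imat" where
  "msub A B = (\<lambda>i j. A i j - B i j)"

definition mzero :: "'m imat" where
  "mzero = (\<lambda>i j. 0)"

definition mId :: "'m imat" where
  "mId = (\<lambda>i j. if i = j then 1 else 0)"

primrec mpow :: "('m::finite) imat \<Rightarrow> nat \<Rightarrow> 'm imat" where
  "mpow A 0 = mId"
| "mpow A (Suc k) = mmul (mpow A k) A"

definition Umat :: "('m::monoid_mult) \<Rightarrow> 'm imat" where
  "Umat \<sigma> = (\<lambda>\<tau> \<kappa>. if \<tau> * \<sigma> = \<kappa> then 1 else 0)"

definition UZ :: "('m::{monoid_mult,finite}) imat set" where
  "UZ = {A. \<exists>r :: 'm \<Rightarrow> int. A = (\<lambda>i j. \<Sum>\<mu>\<in>UNIV. r \<mu> * Umat \<mu> i j)}"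

definition idempotent_mat :: "('m::finite) imat \<Rightarrow> bool" where
  "idempotent_mat A \<longleftrightarrow> mmul A A = A"

definition Dset :: "'m imat \<Rightarrow> 'm set" where
  "Dset U = {\<sigma>. U \<sigma> \<sigma> = 1}"

definition dnum :: "'m imat \<Rightarrow> nat" where
  "dnum U = card (Dset U)"

definition Lset :: "('m::monoid_mult) \<Rightarrow> 'm set" where
  "Lset \<sigma> = {\<tau>. \<sigma> * \<tau> = \<sigma>}"

definition loop_equiv :: "('m::monoid_mult) \<Rightarrow> 'm \<Rightarrow> bool" where
  "loop_equiv \<sigma> \<kappa> \<longleftrightarrow> Lset \<sigma> = Lset \<kappa>"

definition Pab :: "nat \<Rightarrow> nat \<Rightarrow> ('m::finite) imat \<Rightarrow> 'm imat" where
  "Pab a b U = msub mId (mpow (msub mId (mpow U a)) b)"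

end

theory Submission
  imports Defs "HOL-Computational_Algebra.Polynomial"
begin

text \<open>Every matrix of \<open>UZ\<close> is supported on pairs \<open>(\<tau>, \<kappa>)\<close> with \<open>\<kappa> \<in> \<tau>M\<close>, a relation
that \<open>R\<close>-triviality makes antisymmetric. Such matrices are therefore triangular and the
diagonal of a product is the product of the diagonals, so idempotents have \<open>0/1\<close> diagonals.
Diagonal entries are also constant on loop-type classes, which yields primitivity once an
idempotent with zero diagonal is known to vanish.

Both that fact and part (3) rest on the Cayley-Hamilton type identity
\<open>U^(n - d) * (U - 1)^d = 0\<close> for \<open>U\<close> with \<open>0/1\<close> diagonal, proved by peeling off an element
\<open>\<sigma>\<close> with \<open>#\<sigma>M\<close> maximal. Since \<open>P = 1 - (1 - x^a)^b\<close> satisfies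
\<open>x^(n - d) * (x - 1)^d dvd P^2 - P\<close> in \<open>\<int>[x]\<close>, evaluating at \<open>U\<close> shows that \<open>P(U)\<close> is
idempotent.\<close>

lemma mmul_assoc: "mmul (mmul A B) C = mmul A (mmul B (C :: ('m::finite) imat))"
proof (intro ext)
  fix i l
  have "mmul (mmul A B) C i l = (\<Sum>k\<in>UNIV. \<Sum>j\<in>UNIV. A i j * B j k * C k l)"
    unfolding mmul_def by (simp add: sum_distrib_right)
  also have "\<dots> = (\<Sum>j\<in>UNIV. \<Sum>k\<in>UNIV. A i j * B j k * C k l)"
    by (rule sum.swap)
  also have "\<dots> = mmul A (mmul B C) i l"
    unfolding mmul_def by (simp add: sum_distrib_left mult.assoc)
  finally show "mmul (mmul A B) C i l = mmul A (mmul B C) i l" .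
qed

lemma mmul_mId_left: "mmul mId A = (A :: ('m::finite) imat)"
  unfolding mmul_def mId_def by (simp add: fun_eq_iff if_distrib[where f="\<lambda>x. x * _"] cong: if_cong)

lemma mmul_mId_right: "mmul A mId = (A :: ('m::finite) imat)"
  unfolding mmul_def mId_def by (simp add: fun_eq_iff if_distrib[where f="\<lambda>x. _ * x"] cong: if_cong)

typedef 'm sqmat = "UNIV :: 'm imat set" by simp

setup_lifting type_definition_sqmat

instantiation sqmat :: (finite) ring_1
begin

lift_definition zero_sqmat :: "'a sqmat" is mzero .
lift_definition one_sqmat :: "'a sqmat" is mId .
lift_definition plus_sqmat :: "'a sqmat \<Rightarrow> 'a sqmat \<Rightarrow> 'a sqmat" is madd .
lift_definition minus_sqmat :: "'a sqmat \<Rightarrow> 'a sqmat \<Rightarrow> 'a sqmat" is msub .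
lift_definition uminus_sqmat :: "'a sqmat \<Rightarrow> 'a sqmat" is "\<lambda>A i j. - A i j" .
lift_definition times_sqmat :: "'a sqmat \<Rightarrow> 'a sqmat \<Rightarrow> 'a sqmat" is mmul .

instance
proof
  fix a b c :: "'a sqmat"
  show "a * b * c = a * (b * c)" by transfer (rule mmul_assoc)
  show "a + b + c = a + (b + c)" by transfer (simp add: madd_def fun_eq_iff algebra_simps)
  show "a + b = b + a" by transfer (simp add: madd_def fun_eq_iff algebra_simps)
  show "0 + a = a" by transfer (simp add: madd_def mzero_def)
  show "- a + a = 0" by transfer (simp add: madd_def mzero_def)
  show "a - b = a + - b" by transfer (simp add: madd_def msub_def)
  show "1 * a = a" by transfer (rule mmul_mId_left)
  show "a * 1 = a" by transfer (rule mmul_mId_right)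
  show "(a + b) * c = a * c + b * c"
    by transfer (simp add: mmul_def madd_def distrib_right sum.distrib)
  show "a * (b + c) = a * b + a * c"
    by transfer (simp add: mmul_def madd_def distrib_left sum.distrib)
  show "(0::'a sqmat) \<noteq> 1" by transfer (simp add: mzero_def mId_def fun_eq_iff)
qed

end

lemma Rep_Abs_sqmat [simp]: "Rep_sqmat (Abs_sqmat A) = A"
  by (simp add: Abs_sqmat_inverse)

lemma Rep_sqmat_power: "Rep_sqmat (M ^ k) = mpow (Rep_sqmat M) k"
  by (induction k) (simp_all add: power_Suc2 times_sqmat.rep_eq one_sqmat.rep_eq del: power_Suc)

lemma idempotent_mat_Rep_sqmat: "idempotent_mat (Rep_sqmat M) \<longleftrightarrow> M * M = M"
  by (simp add: idempotent_mat_def times_sqmat.rep_eq[symmetric] Rep_sqmat_inject)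

text \<open>Library evaluation \<open>poly\<close> needs a commutative ring; here the powers of a single element commute
anyway, so evaluation is still a ring homomorphism.\<close>

definition poly_eval :: "int poly \<Rightarrow> 'r::ring_1 \<Rightarrow> 'r" where
  "poly_eval p X = (\<Sum>i\<le>degree p. of_int (coeff p i) * X ^ i)"

lemma poly_eval_altdef: "degree p \<le> N \<Longrightarrow> poly_eval p X = (\<Sum>i\<le>N. of_int (coeff p i) * X ^ i)"
  unfolding poly_eval_def by (rule sum.mono_neutral_left) (auto simp: coeff_eq_0)

lemma poly_eval_0 [simp]: "poly_eval 0 X = 0"
  by (simp add: poly_eval_def)

lemma poly_eval_1 [simp]: "poly_eval 1 X = 1"
  by (simp add: poly_eval_def)

lemma poly_eval_add: "poly_eval (p + q) X = poly_eval p X + poly_eval q X"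
proof -
  let ?N = "max (degree p) (degree q)"
  have "degree (p + q) \<le> ?N" by (rule degree_add_le_max)
  then show ?thesis
    by (simp add: poly_eval_altdef[of _ ?N] sum.distrib distrib_right)
qed

lemma poly_eval_smult: "poly_eval (smult a p) X = of_int a * poly_eval p X"
  by (simp add: poly_eval_altdef[of "smult a p" "degree p"] poly_eval_def sum_distrib_left mult.assoc)

lemma poly_eval_pCons: "poly_eval (pCons a p) X = of_int a + X * poly_eval p X"
proof -
  have "poly_eval (pCons a p) X = (\<Sum>i\<le>Suc (degree p). of_int (coeff (pCons a p) i) * X ^ i)"
    by (rule poly_eval_altdef) (simp add: degree_pCons_le)
  also have "\<dots> = of_int a + (\<Sum>i\<le>degree p. of_int (coeff p i) * X ^ Suc i)"
    by (simp only: sum.atMost_Suc_shift) simp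
  also have "(\<Sum>i\<le>degree p. of_int (coeff p i) * X ^ Suc i) = X * poly_eval p X"
    unfolding poly_eval_def sum_distrib_left
    by (rule sum.cong) (simp_all, metis mult.assoc mult_of_int_commute)
  finally show ?thesis .
qed

lemma poly_eval_mult: "poly_eval (p * q) X = poly_eval p X * poly_eval q X"
proof (induction p rule: pCons_induct)
  case 0
  then show ?case by simp
next
  case (pCons a p)
  have "poly_eval (pCons a p * q) X = poly_eval (smult a q + pCons 0 (p * q)) X"
    by simp
  also have "\<dots> = of_int a * poly_eval q X + X * (poly_eval p X * poly_eval q X)"
    by (simp add: poly_eval_add poly_eval_smult poly_eval_pCons pCons.IH)
  also have "\<dots> = poly_eval (pCons a p) X * poly_eval q X"
    by (simp add: poly_eval_pCons distrib_right mult.assoc)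
  finally show ?case .
qed

lemma poly_eval_diff: "poly_eval (p - q) X = poly_eval p X - poly_eval q X"
  using poly_eval_add[of "p - q" q X] by (simp add: eq_diff_eq)

lemma poly_eval_power: "poly_eval (p ^ k) X = poly_eval p X ^ k"
  by (induction k) (simp_all add: poly_eval_mult)

lemma poly_eval_x: "poly_eval [:0, 1:] X = X"
  by (simp add: poly_eval_pCons)

lemma idempotent_polynomial_mod:
  fixes z m a b :: nat
  assumes "z \<le> a" "m \<le> b"
  defines "x \<equiv> [:0, 1:] :: int poly"
  defines "P \<equiv> 1 - (1 - x ^ a) ^ b"
  shows "x ^ z * (x - 1) ^ m dvd P * P - P"
proof -
  define w where "w = (1 - x ^ a) ^ b"
  have "1 - w = x ^ a * (\<Sum>k<b. (1 - x ^ a) ^ k)"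
    unfolding w_def using one_diff_power_eq[of "1 - x ^ a" b] by simp
  then have "x ^ z dvd 1 - w"
    by (simp add: dvd_mult2 le_imp_power_dvd[OF assms(1)])
  moreover have "(x - 1) ^ m dvd w"
  proof -
    have "1 - x ^ a = - ((x - 1) * (\<Sum>k<a. x ^ k))"
      using one_diff_power_eq[of x a] by (simp add: algebra_simps)
    then have "x - 1 dvd 1 - x ^ a" by simp
    then have "(x - 1) ^ m dvd (1 - x ^ a) ^ m" by (rule dvd_power_same)
    also have "\<dots> dvd w" unfolding w_def by (rule le_imp_power_dvd[OF assms(2)])
    finally show ?thesis .
  qed
  ultimately have "x ^ z * (x - 1) ^ m dvd (1 - w) * w" by (rule mult_dvd_mono)
  moreover have "P * P - P = - ((1 - w) * w)"
    unfolding P_def w_def by (simp add: algebra_simps)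
  ultimately show ?thesis by simp
qed

section \<open>Triangularity with respect to the \<open>\<R>\<close>-order\<close>

definition R_triangular :: "('m::monoid_mult) imat \<Rightarrow> bool" where
  "R_triangular A \<longleftrightarrow> (\<forall>\<tau> \<kappa>. A \<tau> \<kappa> \<noteq> 0 \<longrightarrow> \<kappa> \<in> range ((*) \<tau>))"

lemma range_mult_mono: "(\<sigma>::'m::monoid_mult) \<in> range ((*) \<tau>) \<Longrightarrow> range ((*) \<sigma>) \<subseteq> range ((*) \<tau>)"
  by (auto simp: mult.assoc)

lemma R_trivial_antisym:
  assumes "R_trivial TYPE('m::monoid_mult)"
    and "(\<kappa>::'m) \<in> range ((*) \<sigma>)" "\<sigma> \<in> range ((*) \<kappa>)"
  shows "\<kappa> = \<sigma>"
  using assms range_mult_mono[OF assms(2)] range_mult_mono[OF assms(3)]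
  unfolding R_trivial_def by blast

lemma R_trivial_card_max_notin:
  assumes "R_trivial TYPE('m::{monoid_mult,finite})"
    and "\<kappa> \<in> S" "\<kappa> \<noteq> \<sigma>"
    and max: "\<forall>\<tau>\<in>S. card (range ((*) \<tau>)) \<le> card (range ((*) (\<sigma>::'m)))"
  shows "\<sigma> \<notin> range ((*) \<kappa>)"
proof
  assume "\<sigma> \<in> range ((*) \<kappa>)"
  then have "range ((*) \<sigma>) \<subseteq> range ((*) \<kappa>)" by (rule range_mult_mono)
  moreover have "card (range ((*) \<kappa>)) \<le> card (range ((*) \<sigma>))" using max assms(2) by blast
  ultimately have "range ((*) \<sigma>) = range ((*) \<kappa>)"
    by (metis antisym card_mono card_subset_eq finite)
  with assms(1,3) show False unfolding R_trivial_def by blast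
qed

lemma UZ_R_triangular: "A \<in> (UZ :: ('m::{monoid_mult,finite}) imat set) \<Longrightarrow> R_triangular A"
  unfolding UZ_def R_triangular_def Umat_def
  by (fastforce elim: sum.not_neutral_contains_not_neutral split: if_splits)

lemma UZ_diag_eq_if_loop_equiv:
  assumes "A \<in> (UZ :: ('m::{monoid_mult,finite}) imat set)" "loop_equiv \<sigma> \<kappa>"
  shows "A \<sigma> \<sigma> = A \<kappa> \<kappa>"
proof -
  have "\<sigma> * \<mu> = \<sigma> \<longleftrightarrow> \<kappa> * \<mu> = \<kappa>" for \<mu>
    using assms(2) unfolding loop_equiv_def Lset_def by blast
  with assms(1) show ?thesis by (auto simp: UZ_def Umat_def)
qed

lemma R_triangular_mId: "R_triangular (mId :: ('m::monoid_mult) imat)"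
  unfolding R_triangular_def mId_def by (auto intro: range_eqI[where x=1])

lemma R_triangular_msub: "R_triangular A \<Longrightarrow> R_triangular B \<Longrightarrow> R_triangular (msub A B)"
  unfolding R_triangular_def msub_def by (metis diff_zero diff_self)

lemma R_triangular_mmul:
  assumes "R_triangular A" "R_triangular (B :: ('m::{monoid_mult,finite}) imat)"
  shows "R_triangular (mmul A B)"
  unfolding R_triangular_def
proof (intro allI impI)
  fix \<tau> \<kappa>
  assume "mmul A B \<tau> \<kappa> \<noteq> 0"
  then obtain j where "A \<tau> j * B j \<kappa> \<noteq> 0"
    unfolding mmul_def by (meson sum.neutral)
  then have "j \<in> range ((*) \<tau>)" "\<kappa> \<in> range ((*) j)"
    using assms unfolding R_triangular_def by auto
  then show "\<kappa> \<in> range ((*) \<tau>)" using range_mult_mono by blast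
qed

lemma R_triangular_mpow: "R_triangular A \<Longrightarrow> R_triangular (mpow (A :: ('m::{monoid_mult,finite}) imat) k)"
  by (induction k) (simp_all add: R_triangular_mId R_triangular_mmul)

lemma diag_mmul_R_triangular:
  assumes R: "R_trivial TYPE('m::{monoid_mult,finite})"
    and "R_triangular A" "R_triangular B"
  shows "mmul A (B :: 'm imat) \<sigma> \<sigma> = A \<sigma> \<sigma> * B \<sigma> \<sigma>"
proof -
  have "A \<sigma> j * B j \<sigma> = 0" if "j \<noteq> \<sigma>" for j
  proof (rule ccontr)
    assume "A \<sigma> j * B j \<sigma> \<noteq> 0"
    then have "j \<in> range ((*) \<sigma>)" "\<sigma> \<in> range ((*) j)"
      using assms(2,3) unfolding R_triangular_def by auto
    with R that show False using R_trivial_antisym by blast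
  qed
  then show ?thesis
    unfolding mmul_def by (simp add: sum.remove[of UNIV \<sigma>] sum.neutral)
qed

lemma diag_mpow_R_triangular:
  assumes "R_trivial TYPE('m::{monoid_mult,finite})" "R_triangular A"
  shows "mpow (A :: 'm imat) k \<sigma> \<sigma> = A \<sigma> \<sigma> ^ k"
  by (induction k) (simp_all add: mId_def diag_mmul_R_triangular[OF assms(1) R_triangular_mpow assms(2)] assms(2))

section \<open>A Cayley-Hamilton identity\<close>

lemma col_support_mmul_shrinks:
  assumes R: "R_trivial TYPE('m::{monoid_mult,finite})"
    and C: "R_triangular C" "C \<sigma> \<sigma> = 0"
    and closed: "\<forall>\<tau>\<in>S. range ((*) \<tau>) \<subseteq> S"
    and max: "\<forall>\<tau>\<in>S. card (range ((*) \<tau>)) \<le> card (range ((*) (\<sigma>::'m)))"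
    and B: "\<forall>i j. B i j \<noteq> 0 \<longrightarrow> j \<in> S"
  shows "\<forall>i j. mmul B C i j \<noteq> 0 \<longrightarrow> j \<in> S - {\<sigma>}"
proof (intro allI impI)
  fix i j
  assume "mmul B C i j \<noteq> 0"
  then obtain k where "B i k * C k j \<noteq> 0"
    unfolding mmul_def by (meson sum.neutral)
  then have k: "B i k \<noteq> 0" "C k j \<noteq> 0" by auto
  then have "k \<in> S" "j \<in> range ((*) k)"
    using B C(1) unfolding R_triangular_def by auto
  moreover have "j \<noteq> \<sigma>"
  proof
    assume "j = \<sigma>"
    with k C(2) have "k \<noteq> \<sigma>" by auto
    then have "\<sigma> \<notin> range ((*) k)" using R_trivial_card_max_notin[OF R \<open>k \<in> S\<close> _ max] by blast
    with \<open>j = \<sigma>\<close> \<open>j \<in> range ((*) k)\<close> show False by simp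
  qed
  ultimately show "j \<in> S - {\<sigma>}" using closed by blast
qed

text \<open>Right multiplication by \<open>M\<close> (if \<open>A \<sigma> \<sigma> = 0\<close>) or by \<open>M - 1\<close> (if \<open>A \<sigma> \<sigma> = 1\<close>) kills the
column of an element \<open>\<sigma>\<close> of \<open>S\<close> with \<open>#\<sigma>M\<close> maximal, and \<open>S - {\<sigma>}\<close> is again closed under
right multiplication.\<close>

lemma mult_power_mult_power_eq_0:
  fixes A :: "('m::{monoid_mult,finite}) imat"
  assumes R: "R_trivial TYPE('m)"
    and A: "R_triangular A" "\<forall>\<sigma>. A \<sigma> \<sigma> = 0 \<or> A \<sigma> \<sigma> = 1"
    and "\<forall>\<tau>\<in>S. range ((*) \<tau>) \<subseteq> S" "\<forall>i j. Rep_sqmat B i j \<noteq> 0 \<longrightarrow> j \<in> S"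
  defines "M \<equiv> Abs_sqmat A"
  shows "B * M ^ card {\<sigma>\<in>S. A \<sigma> \<sigma> = 0} * (M - 1) ^ card {\<sigma>\<in>S. A \<sigma> \<sigma> = 1} = 0"
  using assms(4,5)
proof (induction "card S" arbitrary: S B rule: less_induct)
  case less
  show ?case
  proof (cases "S = {}")
    case True
    with less.prems(2) have "Rep_sqmat B = Rep_sqmat 0"
      by (auto simp: zero_sqmat.rep_eq mzero_def)
    then show ?thesis by (simp add: Rep_sqmat_inject)
  next
    case False
    let ?r = "\<lambda>\<tau>::'m. card (range ((*) \<tau>))"
    have "Max (?r ` S) \<in> ?r ` S" using False by simp
    then obtain \<sigma> where \<sigma>: "\<sigma> \<in> S" "Max (?r ` S) = ?r \<sigma>" by blast
    then have max: "\<forall>\<tau>\<in>S. ?r \<tau> \<le> ?r \<sigma>" by (metis Max_ge finite finite_imageI imageI)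
    define S' where "S' = S - {\<sigma>}"
    have closed': "\<forall>\<tau>\<in>S'. range ((*) \<tau>) \<subseteq> S'"
    proof
      fix \<tau> assume "\<tau> \<in> S'"
      then have "\<sigma> \<notin> range ((*) \<tau>)"
        using R_trivial_card_max_notin[OF R _ _ max] unfolding S'_def by blast
      with \<open>\<tau> \<in> S'\<close> less.prems(1) show "range ((*) \<tau>) \<subseteq> S'"
        unfolding S'_def by blast
    qed
    have card_less: "card S' < card S"
      unfolding S'_def using \<sigma>(1) by (metis card_Diff1_less finite)
    have IH: "B' * M ^ card {\<tau>\<in>S'. A \<tau> \<tau> = 0} * (M - 1) ^ card {\<tau>\<in>S'. A \<tau> \<tau> = 1} = 0"
      if "\<forall>i j. Rep_sqmat B' i j \<noteq> 0 \<longrightarrow> j \<in> S'" for B'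
      by (rule less.hyps[OF card_less closed' that])
    have shrink: "\<forall>i j. Rep_sqmat (B * N) i j \<noteq> 0 \<longrightarrow> j \<in> S'"
      if "R_triangular (Rep_sqmat N)" "Rep_sqmat N \<sigma> \<sigma> = 0" for N
      unfolding S'_def times_sqmat.rep_eq
      by (rule col_support_mmul_shrinks[OF R that less.prems(1) max less.prems(2)])
    have card_insert: "card {\<tau>\<in>S. A \<tau> \<tau> = c} = Suc (card {\<tau>\<in>S'. A \<tau> \<tau> = c})"
      if "A \<sigma> \<sigma> = c" for c
    proof -
      have "{\<tau>\<in>S. A \<tau> \<tau> = c} = insert \<sigma> {\<tau>\<in>S'. A \<tau> \<tau> = c}"
        using \<sigma>(1) that unfolding S'_def by auto
      then show ?thesis by (simp add: S'_def)
    qed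
    have card_same: "card {\<tau>\<in>S. A \<tau> \<tau> = c} = card {\<tau>\<in>S'. A \<tau> \<tau> = c}"
      if "A \<sigma> \<sigma> \<noteq> c" for c
      using that unfolding S'_def by (metis (mono_tags) Diff_iff empty_iff insert_iff)
    from A(2) consider "A \<sigma> \<sigma> = 0" | "A \<sigma> \<sigma> = 1" by blast
    then show ?thesis
    proof cases
      case 1
      have "R_triangular (Rep_sqmat M)" "Rep_sqmat M \<sigma> \<sigma> = 0"
        by (simp_all add: M_def A(1) 1)
      then have "(B * M) * M ^ card {\<tau>\<in>S'. A \<tau> \<tau> = 0} * (M - 1) ^ card {\<tau>\<in>S'. A \<tau> \<tau> = 1} = 0"
        by (intro IH shrink)
      then show ?thesis
        by (simp add: card_insert[OF 1] card_same 1 mult.assoc)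
    next
      case 2
      have "Rep_sqmat (M - 1) = msub A mId"
        by (simp add: M_def minus_sqmat.rep_eq one_sqmat.rep_eq)
      then have "R_triangular (Rep_sqmat (M - 1))" "Rep_sqmat (M - 1) \<sigma> \<sigma> = 0"
        using R_triangular_msub[OF A(1) R_triangular_mId] 2 by (simp_all add: msub_def mId_def)
      then have "(B * (M - 1)) * M ^ card {\<tau>\<in>S'. A \<tau> \<tau> = 0} * (M - 1) ^ card {\<tau>\<in>S'. A \<tau> \<tau> = 1} = 0"
        by (intro IH shrink)
      moreover have "M ^ k * (M - 1) = (M - 1) * M ^ k" for k
        by (rule power_commuting_commutes) (simp add: algebra_simps)
      then have "B * M ^ k * (M - 1) ^ Suc l = (B * (M - 1)) * M ^ k * (M - 1) ^ l" for k l
        by (metis mult.assoc power_Suc)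
      ultimately show ?thesis
        by (simp add: card_insert[OF 2] card_same 2 del: power_Suc)
    qed
  qed
qed

lemma power_mult_power_minus_one_eq_0:
  fixes A :: "('m::{monoid_mult,finite}) imat"
  assumes "R_trivial TYPE('m)" "R_triangular A" "\<forall>\<sigma>. A \<sigma> \<sigma> = 0 \<or> A \<sigma> \<sigma> = 1"
  shows "Abs_sqmat A ^ (card (UNIV :: 'm set) - dnum A) * (Abs_sqmat A - 1) ^ dnum A = 0"
proof -
  have "{\<sigma>. A \<sigma> \<sigma> = 1} = Dset A" "{\<sigma>. A \<sigma> \<sigma> = 0} = UNIV - Dset A"
    using assms(3) by (auto simp: Dset_def)
  moreover have "1 * Abs_sqmat A ^ card {\<sigma>\<in>UNIV. A \<sigma> \<sigma> = 0} * (Abs_sqmat A - 1) ^ card {\<sigma>\<in>UNIV. A \<sigma> \<sigma> = 1} = 0"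
    by (rule mult_power_mult_power_eq_0[OF assms]) auto
  ultimately show ?thesis by (simp add: dnum_def card_Diff_subset)
qed

lemma idempotent_R_triangular_diag_01:
  assumes "R_trivial TYPE('m::{monoid_mult,finite})" "R_triangular (E :: 'm imat)" "idempotent_mat E"
  shows "E \<sigma> \<sigma> = 0 \<or> E \<sigma> \<sigma> = 1"
proof -
  have "E \<sigma> \<sigma> * E \<sigma> \<sigma> = E \<sigma> \<sigma>"
    using diag_mmul_R_triangular[OF assms(1,2,2)] assms(3) unfolding idempotent_mat_def by metis
  then have "E \<sigma> \<sigma> * (E \<sigma> \<sigma> - 1) = 0" by (simp add: algebra_simps)
  then show ?thesis by simp
qed

lemma idempotent_R_triangular_zero_diag:
  assumes "R_trivial TYPE('m::{monoid_mult,finite})" "R_triangular (X :: 'm imat)"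
    and "idempotent_mat X" "\<forall>\<kappa>. X \<kappa> \<kappa> = 0"
  shows "X = mzero"
proof -
  let ?M = "Abs_sqmat X"
  have "dnum X = 0" using assms(4) by (simp add: dnum_def Dset_def)
  then have "?M ^ card (UNIV :: 'm set) = 0"
    using power_mult_power_minus_one_eq_0[OF assms(1,2)] assms(4) by simp
  moreover have "?M * ?M = ?M"
    using assms(3) idempotent_mat_Rep_sqmat[of ?M] by simp
  then have "?M ^ Suc k = ?M" for k
    by (induction k) (simp_all add: mult.assoc[symmetric])
  then have "?M ^ card (UNIV :: 'm set) = ?M"
    by (metis Suc_pred finite_UNIV_card_ge_0 finite)
  ultimately show ?thesis
    by (metis Rep_Abs_sqmat zero_sqmat.rep_eq)
qed

lemma UZ_idempotent_primitive:
  assumes R: "R_trivial TYPE('m::{monoid_mult,finite})"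
    and E: "E \<in> UZ" "idempotent_mat E" "Dset E = {\<kappa>. loop_equiv \<kappa> \<sigma>}"
    and XY: "X \<in> UZ" "Y \<in> UZ" "E = madd X Y" "idempotent_mat X" "idempotent_mat (Y :: 'm imat)"
  shows "X = mzero \<or> Y = mzero"
proof (rule ccontr)
  have diag_01: "Z \<kappa> \<kappa> = 0 \<or> Z \<kappa> \<kappa> = 1" if "Z \<in> UZ" "idempotent_mat Z" for Z :: "'m imat" and \<kappa>
    using idempotent_R_triangular_diag_01[OF R UZ_R_triangular] that by blast
  assume "\<not> (X = mzero \<or> Y = mzero)"
  then obtain \<kappa>\<^sub>1 \<kappa>\<^sub>2 where "X \<kappa>\<^sub>1 \<kappa>\<^sub>1 \<noteq> 0" "Y \<kappa>\<^sub>2 \<kappa>\<^sub>2 \<noteq> 0"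
    using idempotent_R_triangular_zero_diag[OF R UZ_R_triangular] XY by blast
  then have "X \<kappa>\<^sub>1 \<kappa>\<^sub>1 = 1" "Y \<kappa>\<^sub>2 \<kappa>\<^sub>2 = 1"
    using diag_01 XY by blast+
  moreover have "E \<kappa> \<kappa> = X \<kappa> \<kappa> + Y \<kappa> \<kappa>" for \<kappa>
    using XY(3) by (simp add: madd_def)
  ultimately have "Y \<kappa>\<^sub>1 \<kappa>\<^sub>1 = 0" "E \<kappa>\<^sub>1 \<kappa>\<^sub>1 = 1" "E \<kappa>\<^sub>2 \<kappa>\<^sub>2 = 1"
    using diag_01[OF E(1,2), of \<kappa>\<^sub>1] diag_01[OF E(1,2), of \<kappa>\<^sub>2] diag_01[OF XY(2,5), of \<kappa>\<^sub>1]
      diag_01[OF XY(1,4), of \<kappa>\<^sub>2] by fastforce+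
  moreover have "loop_equiv \<kappa>\<^sub>1 \<kappa>\<^sub>2"
    using \<open>E \<kappa>\<^sub>1 \<kappa>\<^sub>1 = 1\<close> \<open>E \<kappa>\<^sub>2 \<kappa>\<^sub>2 = 1\<close> E(3) by (auto simp: Dset_def loop_equiv_def)
  then have "Y \<kappa>\<^sub>1 \<kappa>\<^sub>1 = Y \<kappa>\<^sub>2 \<kappa>\<^sub>2" by (rule UZ_diag_eq_if_loop_equiv[OF XY(2)])
  ultimately show False using \<open>Y \<kappa>\<^sub>2 \<kappa>\<^sub>2 = 1\<close> by simp
qed

lemma Pab_eq_Rep_sqmat: "Pab a b U = Rep_sqmat (1 - (1 - Abs_sqmat U ^ a) ^ b)"
  by (simp add: Pab_def minus_sqmat.rep_eq one_sqmat.rep_eq Rep_sqmat_power)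

lemma idempotent_Pab:
  assumes "R_trivial TYPE('m::{monoid_mult,finite})" "R_triangular (U :: 'm imat)"
    and "\<forall>\<sigma>. U \<sigma> \<sigma> = 0 \<or> U \<sigma> \<sigma> = 1"
    and ab: "a \<ge> card (UNIV :: 'm set) - dnum U" "b \<ge> dnum U"
  shows "idempotent_mat (Pab a b U)"
proof -
  let ?M = "Abs_sqmat U" and ?z = "card (UNIV :: 'm set) - dnum U"
  define x where "x = ([:0, 1:] :: int poly)"
  define P where "P = 1 - (1 - x ^ a) ^ b"
  obtain q where q: "P * P - P = x ^ ?z * (x - 1) ^ dnum U * q"
    using idempotent_polynomial_mod[OF ab] unfolding P_def x_def by (elim dvdE)
  have eval_x: "poly_eval x ?M = ?M" by (simp add: x_def poly_eval_x)
  have "poly_eval P ?M * poly_eval P ?M - poly_eval P ?M = poly_eval (P * P - P) ?M"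
    by (simp add: poly_eval_mult poly_eval_diff)
  also have "\<dots> = ?M ^ ?z * (?M - 1) ^ dnum U * poly_eval q ?M"
    by (simp add: q poly_eval_mult poly_eval_diff poly_eval_power eval_x)
  also have "\<dots> = 0"
    by (simp add: power_mult_power_minus_one_eq_0[OF assms(1-3)])
  finally have "poly_eval P ?M * poly_eval P ?M = poly_eval P ?M" by simp
  moreover have "poly_eval P ?M = 1 - (1 - ?M ^ a) ^ b"
    by (simp add: P_def poly_eval_diff poly_eval_power eval_x)
  ultimately show ?thesis by (simp add: Pab_eq_Rep_sqmat idempotent_mat_Rep_sqmat)
qed

lemma diag_Pab:
  assumes R: "R_trivial TYPE('m::{monoid_mult,finite})" and U: "R_triangular (U :: 'm imat)"
    and "\<forall>\<sigma>. U \<sigma> \<sigma> = 0 \<or> U \<sigma> \<sigma> = 1"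
    and ab: "a \<ge> card (UNIV :: 'm set) - dnum U" "b \<ge> dnum U"
  shows "Pab a b U \<sigma> \<sigma> = U \<sigma> \<sigma>"
proof -
  have "Pab a b U \<sigma> \<sigma> = 1 - mpow (msub mId (mpow U a)) b \<sigma> \<sigma>"
    by (simp add: Pab_def msub_def mId_def)
  also have "mpow (msub mId (mpow U a)) b \<sigma> \<sigma> = msub mId (mpow U a) \<sigma> \<sigma> ^ b"
    by (rule diag_mpow_R_triangular[OF R R_triangular_msub[OF R_triangular_mId R_triangular_mpow[OF U]]])
  also have "msub mId (mpow U a) \<sigma> \<sigma> = 1 - U \<sigma> \<sigma> ^ a"
    by (simp add: msub_def mId_def diag_mpow_R_triangular[OF R U])
  finally have diag: "Pab a b U \<sigma> \<sigma> = 1 - (1 - U \<sigma> \<sigma> ^ a) ^ b" .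
  from assms(3) consider "U \<sigma> \<sigma> = 1" | "U \<sigma> \<sigma> = 0" by blast
  then show ?thesis
  proof cases
    case 1
    then have "\<sigma> \<in> Dset U" by (simp add: Dset_def)
    then have "dnum U > 0" unfolding dnum_def by (auto simp: card_gt_0_iff)
    with ab(2) have "b > 0" by simp
    with diag 1 show ?thesis by simp
  next
    case 2
    then have "\<sigma> \<notin> Dset U" by (simp add: Dset_def)
    then have "Dset U \<subset> UNIV" by blast
    then have "dnum U < card (UNIV :: 'm set)" unfolding dnum_def by (simp add: psubset_card_mono)
    with ab(1) have "a > 0" by simp
    with diag 2 show ?thesis by (simp add: zero_power)
  qed
qed

theorem mainTheorem6:
  assumes "R_trivial TYPE('m::{monoid_mult,finite})"
  shows "(\<forall>E \<in> (UZ :: 'm imat set). idempotent_mat E \<longrightarrow>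
            (\<forall>\<sigma>. E \<sigma> \<sigma> = 0 \<or> E \<sigma> \<sigma> = 1))
       \<and> (\<forall>E \<in> (UZ :: 'm imat set). idempotent_mat E
            \<longrightarrow> (\<exists>\<sigma>. Dset E = {\<kappa>. loop_equiv \<kappa> \<sigma>})
            \<longrightarrow> (\<forall>X \<in> UZ. \<forall>Y \<in> UZ.
                   E = madd X Y \<and> idempotent_mat X \<and> idempotent_mat Y
                   \<and> mmul X Y = mzero \<and> mmul Y X = mzero
                   \<longrightarrow> X = mzero \<or> Y = mzero))
       \<and> (\<forall>U \<in> (UZ :: 'm imat set). \<forall>a b :: nat.
            (\<forall>\<sigma>. U \<sigma> \<sigma> = 0 \<or> U \<sigma> \<sigma> = 1)
            \<and> a \<ge> card (UNIV :: 'm set) - dnum U \<and> b \<ge> dnum U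
            \<longrightarrow> idempotent_mat (Pab a b U)
                \<and> (\<forall>\<sigma>. Pab a b U \<sigma> \<sigma> = U \<sigma> \<sigma>))"
proof (intro conjI ballI allI impI)
  fix E :: "'m imat" and \<sigma>
  assume "E \<in> UZ" "idempotent_mat E"
  then show "E \<sigma> \<sigma> = 0 \<or> E \<sigma> \<sigma> = 1"
    by (rule idempotent_R_triangular_diag_01[OF assms UZ_R_triangular])
next
  fix E X Y :: "'m imat"
  assume "E \<in> UZ" "idempotent_mat E" "\<exists>\<sigma>. Dset E = {\<kappa>. loop_equiv \<kappa> \<sigma>}" "X \<in> UZ" "Y \<in> UZ"
    and "E = madd X Y \<and> idempotent_mat X \<and> idempotent_mat Y \<and> mmul X Y = mzero \<and> mmul Y X = mzero"
  then show "X = mzero \<or> Y = mzero"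
    using UZ_idempotent_primitive[OF assms] by blast
next
  fix U :: "'m imat" and a b
  assume "U \<in> UZ"
    and "(\<forall>\<sigma>. U \<sigma> \<sigma> = 0 \<or> U \<sigma> \<sigma> = 1) \<and> a \<ge> card (UNIV :: 'm set) - dnum U \<and> b \<ge> dnum U"
  then show "idempotent_mat (Pab a b U)" "Pab a b U \<sigma> \<sigma> = U \<sigma> \<sigma>" for \<sigma>
    using idempotent_Pab[OF assms UZ_R_triangular] diag_Pab[OF assms UZ_R_triangular] by blast+
qed

end
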